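(* Let $G=(V,E)$ with weight $\mu$ be an infinite, connected, locally finite weighted graph satisfying condition $(p_0)$. Let $m\ge 3$ and $(p,q)\in G_{5.2}=\{(p,q): p+q=m-1,\ q<0\}$. Then the inequality $\Delta_m u+u^p|\nabla u|^q\le 0$ on $V$ admits no nontrivial positive solution (no volume growth assumption is imposed).
   Context: Setting: $G=(V,E)$ is an infinite, connected, locally finite graph with no loops and no multiple edges; $x\sim y$ means $x$ and $y$ are joined by an edge. A weight is a symmetric function $\mu:V\times V\to[0,\infty)$ with $\mu_{xy}=\mu_{yx}>0$ if and only if $x\sim y$; the vertex measure is $\mu(x)=\sum_{y\sim x}\mu_{xy}$. For $m>1$ and $u:V\to\mathbb R$, $\Delta_m u(x)=\frac{1}{\mu(x)}\sum_{y\sim x}\mu_{xy}|u(y)-u(x)|^{m-2}(u(y)-u(x))$ and $|\nabla u(x)|=\big(\sum_{y\sim x}\frac{\mu_{xy}}{2\mu(x)}(u(y)-u(x))^2\big)^{1/2}$. Condition $(p_0)$: there is a constant $p_0>1$ such that $\mu_{xy}/\mu(x)\ge 1/p_0$ for all $x\sim y$. A nontrivial positive solution of $\Delta_m u+u^p|\nabla u|^q\le 0$ is a non-constant function $u:V\to(0,\infty)$ such that $\Delta_m u(x)+u(x)^p|\nabla u(x)|^q\le 0$ for every $x\in V$, with the conventions $0^0=1$, $0^q=0$ for $q>0$, and, for $q<0$, $|\nabla u(x)|^q=+\infty$ when $|\nabla u(x)|=0$ (so the inequality fails at such $x$). *)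

theory Defs
  imports "HOL-Analysis.Analysis"
begin

definition weighted_graph :: "('v \<Rightarrow> 'v \<Rightarrow> bool) \<Rightarrow> ('v \<Rightarrow> 'v \<Rightarrow> real) \<Rightarrow> bool" where
  "weighted_graph E mu \<longleftrightarrow>
     infinite (UNIV :: 'v set) \<and>
     (\<forall>x y. E x y \<longleftrightarrow> E y x) \<and>
     (\<forall>x. \<not> E x x) \<and>
     (\<forall>x. finite {y. E x y}) \<and>
     (\<forall>x y. E\<^sup>*\<^sup>* x y) \<and>
     (\<forall>x y. mu x y = mu y x) \<and>
     (\<forall>x y. mu x y \<ge> 0) \<and>
     (\<forall>x y. mu x y > 0 \<longleftrightarrow> E x y)"

definition vmeasure :: "('v \<Rightarrow> 'v \<Rightarrow> bool) \<Rightarrow> ('v \<Rightarrow> 'v \<Rightarrow> real) \<Rightarrow> 'v \<Rightarrow> real" where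
  "vmeasure E mu x = (\<Sum>y\<in>{y. E x y}. mu x y)"

definition cond_p0 :: "('v \<Rightarrow> 'v \<Rightarrow> bool) \<Rightarrow> ('v \<Rightarrow> 'v \<Rightarrow> real) \<Rightarrow> real \<Rightarrow> bool" where
  "cond_p0 E mu p0 \<longleftrightarrow> p0 > 1 \<and> (\<forall>x y. E x y \<longrightarrow> mu x y / vmeasure E mu x \<ge> 1 / p0)"

definition m_laplacian :: "('v \<Rightarrow> 'v \<Rightarrow> bool) \<Rightarrow> ('v \<Rightarrow> 'v \<Rightarrow> real) \<Rightarrow> real \<Rightarrow> ('v \<Rightarrow> real) \<Rightarrow> 'v \<Rightarrow> real" where
  "m_laplacian E mu m u x =
     (1 / vmeasure E mu x) *
     (\<Sum>y\<in>{y. E x y}. mu x y * \<bar>u y - u x\<bar> powr (m - 2) * (u y - u x))"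

definition grad_norm :: "('v \<Rightarrow> 'v \<Rightarrow> bool) \<Rightarrow> ('v \<Rightarrow> 'v \<Rightarrow> real) \<Rightarrow> ('v \<Rightarrow> real) \<Rightarrow> 'v \<Rightarrow> real" where
  "grad_norm E mu u x =
     sqrt (\<Sum>y\<in>{y. E x y}. mu x y / (2 * vmeasure E mu x) * (u y - u x)\<^sup>2)"

text \<open>Nontrivial positive solution of  Delta_m u + u^p |grad u|^q \<le> 0  for q < 0:
  at points with vanishing gradient |grad u|^q = +infinity, so the inequality fails;
  hence a solution needs positive gradient everywhere.\<close>
definition nontrivial_pos_solution_negq ::
  "('v \<Rightarrow> 'v \<Rightarrow> bool) \<Rightarrow> ('v \<Rightarrow> 'v \<Rightarrow> real) \<Rightarrow> real \<Rightarrow> real \<Rightarrow> real \<Rightarrow> ('v \<Rightarrow> real) \<Rightarrow> bool" where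
  "nontrivial_pos_solution_negq E mu m p q u \<longleftrightarrow>
     (\<exists>x y. u x \<noteq> u y) \<and>
     (\<forall>x. u x > 0) \<and>
     (\<forall>x. grad_norm E mu u x > 0 \<and>
          m_laplacian E mu m u x + u x powr p * grad_norm E mu u x powr q \<le> 0)"

end

theory Submission
  imports Defs
begin

text \<open>
  The inequality already fails at each single vertex \<open>x\<close>. Put \<open>a = u x > 0\<close> and
  \<open>g = |\<nabla>u(x)| > 0\<close>. Every difference \<open>d = u y - a\<close> exceeds \<open>-a\<close>, so
  \<open>\<Delta>\<^sub>m u(x) > -a\<^bsup>m-1\<^esup>\<close>; if \<open>g < a\<close> then, as \<open>q < 0\<close>,
  \<open>a\<^bsup>p\<^esup> g\<^bsup>q\<^esup> > a\<^bsup>p+q\<^esup> = a\<^bsup>m-1\<^esup>\<close>, and the inequality is violated.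
  For \<open>m \<ge> 3\<close> the elementary bound
  \<open>|d|\<^bsup>m-2\<^esup> d \<ge> a\<^bsup>m-3\<^esup> d\<^sup>2 - 2 a\<^bsup>m-1\<^esup>\<close> gives
  \<open>\<Delta>\<^sub>m u(x) \<ge> 2 a\<^bsup>m-3\<^esup> (g\<^sup>2 - a\<^sup>2)\<close>, which is nonnegative if \<open>g \<ge> a\<close>.
\<close>

lemma powr_diff_two_mult_square:
  fixes x e :: real
  assumes "x \<ge> 0"
  shows "x powr (e - 2) * x\<^sup>2 = x powr e"
proof (cases "x = 0")
  case False
  have "x powr e = x powr ((e - 2) + 2)" by simp
  also have "\<dots> = x powr (e - 2) * x powr 2" by (rule powr_add)
  finally show ?thesis using assms by simp
qed simp

lemma abs_powr_mult_self_gt: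
  fixes a d m :: real
  assumes "a > 0" and "d > - a" and "m > 1"
  shows "\<bar>d\<bar> powr (m - 2) * d > - (a powr (m - 1))"
proof (cases "d \<ge> 0")
  case True
  have "- (a powr (m - 1)) < 0" using \<open>a > 0\<close> by simp
  also have "0 \<le> \<bar>d\<bar> powr (m - 2) * d" using True by simp
  finally show ?thesis .
next
  case False
  have "\<bar>d\<bar> powr (m - 2) * d = - (\<bar>d\<bar> * \<bar>d\<bar> powr (m - 2))"
    using False by simp
  also have "\<dots> = - (\<bar>d\<bar> powr (m - 1))"
    by (simp add: powr_mult_base)
  finally show ?thesis
    using False assms by (simp add: powr_less_mono2)
qed

lemma abs_powr_mult_self_ge_quadratic:
  fixes a d m :: real
  assumes "a > 0" and "d > - a" and "m \<ge> 3"
  shows "\<bar>d\<bar> powr (m - 2) * d \<ge> a powr (m - 3) * d\<^sup>2 - 2 * a powr (m - 1)"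
proof (cases "d \<ge> a")
  case True
  have "\<bar>d\<bar> powr (m - 2) * d = d powr (m - 1)"
    using True \<open>a > 0\<close> by (simp add: powr_mult_base mult.commute)
  also have "\<dots> = d powr (m - 3) * d\<^sup>2"
    using powr_diff_two_mult_square[of d "m - 1"] True \<open>a > 0\<close> by simp
  also have "\<dots> \<ge> a powr (m - 3) * d\<^sup>2"
    using True assms by (intro mult_right_mono powr_mono2) auto
  moreover have "a powr (m - 1) > 0" using \<open>a > 0\<close> by simp
  ultimately show ?thesis by linarith
next
  case False
  have "a powr (m - 3) * d\<^sup>2 \<le> a powr (m - 3) * a\<^sup>2"
    using False assms by (intro mult_left_mono) (auto simp: abs_le_square_iff[symmetric])
  also have "\<dots> = a powr (m - 1)"
    using powr_diff_two_mult_square[of a "m - 1"] \<open>a > 0\<close> by simp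
  finally show ?thesis
    using abs_powr_mult_self_gt[of a d m] assms by simp
qed

lemma weighted_graph_has_neighbour:
  fixes E :: "'v \<Rightarrow> 'v \<Rightarrow> bool"
  assumes "weighted_graph E mu"
  shows "\<exists>y. E x y"
proof -
  have "infinite (UNIV :: 'v set)" using assms unfolding weighted_graph_def by blast
  then obtain z :: 'v where "z \<notin> {x}"
    using ex_new_if_finite by blast
  moreover have "E\<^sup>*\<^sup>* x z" using assms unfolding weighted_graph_def by blast
  ultimately show ?thesis by (auto elim: converse_rtranclpE)
qed

lemma weighted_graph_neighbours:
  assumes "weighted_graph E mu"
  shows "finite {y. E x y}" and "{y. E x y} \<noteq> {}" and "\<And>y. E x y \<Longrightarrow> mu x y > 0"
  using assms weighted_graph_has_neighbour[OF assms, of x]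
  unfolding weighted_graph_def by blast+

lemma vmeasure_pos:
  assumes "weighted_graph E mu"
  shows "vmeasure E mu x > 0"
  unfolding vmeasure_def using weighted_graph_neighbours[OF assms]
  by (intro sum_pos) auto

lemma m_laplacian_gt:
  assumes "weighted_graph E mu" and "m > 1" and "\<And>y. u y > 0"
  shows "m_laplacian E mu m u x > - (u x powr (m - 1))"
proof -
  let ?N = "{y. E x y}"
  note N = weighted_graph_neighbours[OF assms(1), of x]
  have "- (u x powr (m - 1)) * vmeasure E mu x = (\<Sum>y\<in>?N. mu x y * - (u x powr (m - 1)))"
    unfolding vmeasure_def by (simp add: sum_distrib_right sum_negf mult.commute)
  also have "\<dots> < (\<Sum>y\<in>?N. mu x y * \<bar>u y - u x\<bar> powr (m - 2) * (u y - u x))"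
    unfolding mult.assoc using N assms(2,3)
    by (intro sum_strict_mono mult_strict_left_mono abs_powr_mult_self_gt) auto
  finally show ?thesis
    using vmeasure_pos[OF assms(1), of x] unfolding m_laplacian_def
    by (simp add: pos_less_divide_eq)
qed

lemma grad_norm_square:
  assumes "weighted_graph E mu"
  shows "(grad_norm E mu u x)\<^sup>2
    = (\<Sum>y\<in>{y. E x y}. mu x y * (u y - u x)\<^sup>2) / (2 * vmeasure E mu x)"
proof -
  have "0 \<le> (\<Sum>y\<in>{y. E x y}. mu x y / (2 * vmeasure E mu x) * (u y - u x)\<^sup>2)"
    using weighted_graph_neighbours(3)[OF assms] vmeasure_pos[OF assms, of x]
    by (intro sum_nonneg) (simp add: less_imp_le)
  then show ?thesis
    unfolding grad_norm_def by (simp add: sum_divide_distrib)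
qed

lemma m_laplacian_ge_grad_norm:
  assumes "weighted_graph E mu" and "m \<ge> 3" and "\<And>y. u y > 0"
  shows "m_laplacian E mu m u x
    \<ge> 2 * u x powr (m - 3) * ((grad_norm E mu u x)\<^sup>2 - (u x)\<^sup>2)"
proof -
  let ?N = "{y. E x y}" and ?M = "vmeasure E mu x" and ?a = "u x"
  note N = weighted_graph_neighbours[OF assms(1), of x]
  have M: "?M > 0" using vmeasure_pos[OF assms(1)] .
  let ?Q = "\<Sum>y\<in>?N. mu x y * (u y - ?a)\<^sup>2"
  have "?a powr (m - 1) = ?a powr (m - 3) * ?a\<^sup>2"
    using powr_diff_two_mult_square[of ?a "m - 1"] assms(3) by (simp add: less_imp_le)
  then have "2 * ?a powr (m - 3) * ((grad_norm E mu u x)\<^sup>2 - ?a\<^sup>2) * ?M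
      = ?a powr (m - 3) * ?Q - 2 * ?a powr (m - 1) * ?M"
    using M unfolding grad_norm_square[OF assms(1)] by (simp add: field_simps)
  also have "\<dots> = (\<Sum>y\<in>?N. mu x y * (?a powr (m - 3) * (u y - ?a)\<^sup>2 - 2 * ?a powr (m - 1)))"
    unfolding vmeasure_def
    by (simp add: algebra_simps sum_subtractf sum_distrib_left sum_distrib_right)
  also have "\<dots> \<le> (\<Sum>y\<in>?N. mu x y * (\<bar>u y - ?a\<bar> powr (m - 2) * (u y - ?a)))"
    using N assms(2,3)
    by (intro sum_mono mult_left_mono abs_powr_mult_self_ge_quadratic) (auto simp: less_imp_le)
  finally show ?thesis
    using M unfolding m_laplacian_def by (simp add: pos_le_divide_eq mult.assoc)
qed

lemma m_laplacian_add_source_pos: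
  assumes "weighted_graph E mu" and "m \<ge> 3" and "p + q = m - 1" and "q < 0"
    and "\<And>y. u y > 0" and "grad_norm E mu u x > 0"
  shows "m_laplacian E mu m u x + u x powr p * grad_norm E mu u x powr q > 0"
proof (cases "grad_norm E mu u x < u x")
  case True
  have "u x powr (m - 1) = u x powr p * u x powr q"
    using assms(3) by (simp add: powr_add[symmetric])
  also have "\<dots> < u x powr p * grad_norm E mu u x powr q"
    using True assms(4-6) by (intro mult_strict_left_mono powr_less_mono2_neg) auto
  moreover have "m_laplacian E mu m u x > - (u x powr (m - 1))"
    using m_laplacian_gt[OF assms(1), of m u x] assms(2,5) by simp
  ultimately show ?thesis by linarith
next
  case False
  then have "(u x)\<^sup>2 \<le> (grad_norm E mu u x)\<^sup>2"
    using assms(5) by (intro power_mono) (auto simp: less_imp_le)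
  then have "0 \<le> 2 * u x powr (m - 3) * ((grad_norm E mu u x)\<^sup>2 - (u x)\<^sup>2)"
    by simp
  also have "\<dots> \<le> m_laplacian E mu m u x"
    using m_laplacian_ge_grad_norm[OF assms(1,2,5)] .
  moreover have "u x powr p * grad_norm E mu u x powr q > 0"
    using assms(5)[of x] assms(6) by simp
  ultimately show ?thesis by simp
qed

theorem mainTheorem6:
  fixes E :: "'v \<Rightarrow> 'v \<Rightarrow> bool" and mu :: "'v \<Rightarrow> 'v \<Rightarrow> real"
    and p0 m p q :: real
  assumes "weighted_graph E mu"
    and "cond_p0 E mu p0"
    and "m \<ge> 3"
    and "p + q = m - 1"
    and "q < 0"
  shows "\<not> (\<exists>u. nontrivial_pos_solution_negq E mu m p q u)"
proof
  assume "\<exists>u. nontrivial_pos_solution_negq E mu m p q u"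
  then obtain u x where positive: "\<And>y. u y > 0" and grad: "grad_norm E mu u x > 0"
    and "m_laplacian E mu m u x + u x powr p * grad_norm E mu u x powr q \<le> 0"
    unfolding nontrivial_pos_solution_negq_def by blast
  moreover have "m_laplacian E mu m u x + u x powr p * grad_norm E mu u x powr q > 0"
    using m_laplacian_add_source_pos[OF assms(1,3,4,5) positive grad] .
  ultimately show False by simp
qed

end
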